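(* Let $P$ and $Q$ be irreducible transition matrices on the finite set $S$, both reversible with respect to $\pi$, with eigenvalues (counting multiplicity) $1=\lambda_1\ge\lambda_2\ge\dots\ge\lambda_n$ for $P$ and $1=\beta_1\ge\beta_2\ge\dots\ge\beta_n$ for $Q$. Suppose $\max_{i\ge2}\lambda_i\le\min_{i\ge2}\beta_i$, i.e. $\lambda_2\le\beta_n$. Then $P$ efficiency-dominates $Q$.
   Context: $S$ is a finite set with $|S|=n$, and $\pi$ is a probability distribution on $S$ with $\pi(x)>0$ for all $x$. A transition matrix $P$ is reversible with respect to $\pi$ if $\pi(x)P(x,y)=\pi(y)P(y,x)$ for all $x,y$ (its eigenvalues are then real); irreducible if every state can be reached from every other with positive probability in some number of steps. For a Markov chain $X_1,X_2,\dots$ with transition matrix $P$ and $X_1\sim\pi$, $v(f,P)=\lim_{N\to\infty}\frac1N\mathrm{Var}\big(\sum_{i=1}^N f(X_i)\big)$. $P$ efficiency-dominates $Q$ if $v(f,P)\le v(f,Q)$ for all $f:S\to\mathbb R$. *)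

theory Defs
  imports "HOL-Analysis.Analysis" "HOL-Computational_Algebra.Polynomial"
begin

text \<open>The finite state space S is a finite type 's; n = CARD('s).
  A matrix on S is a function 's => 's => real.\<close>

definition prob_dist :: "('s::finite \<Rightarrow> real) \<Rightarrow> bool" where
  "prob_dist \<pi> \<longleftrightarrow> (\<forall>x. \<pi> x > 0) \<and> (\<Sum>x\<in>UNIV. \<pi> x) = 1"

definition transition_matrix :: "('s::finite \<Rightarrow> 's \<Rightarrow> real) \<Rightarrow> bool" where
  "transition_matrix P \<longleftrightarrow> (\<forall>x y. P x y \<ge> 0) \<and> (\<forall>x. (\<Sum>y\<in>UNIV. P x y) = 1)"

definition reversible :: "('s::finite \<Rightarrow> real) \<Rightarrow> ('s \<Rightarrow> 's \<Rightarrow> real) \<Rightarrow> bool" where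
  "reversible \<pi> P \<longleftrightarrow> (\<forall>x y. \<pi> x * P x y = \<pi> y * P y x)"

fun mpow :: "('s::finite \<Rightarrow> 's \<Rightarrow> real) \<Rightarrow> nat \<Rightarrow> 's \<Rightarrow> 's \<Rightarrow> real" where
  "mpow P 0 = (\<lambda>x y. if x = y then 1 else 0)"
| "mpow P (Suc k) = (\<lambda>x y. \<Sum>z\<in>UNIV. mpow P k x z * P z y)"

definition irreducible_chain :: "('s::finite \<Rightarrow> 's \<Rightarrow> real) \<Rightarrow> bool" where
  "irreducible_chain P \<longleftrightarrow> (\<forall>x y. \<exists>k. mpow P k x y > 0)"

text \<open>Characteristic polynomial det(X I - P) and eigenvalues counted with multiplicity,
  listed in non-increasing order: eigs P ! 0 \<ge> eigs P ! 1 \<ge> ... (so lambda_i = eigs P ! (i-1)).\<close>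
definition charpoly :: "('s::finite \<Rightarrow> 's \<Rightarrow> real) \<Rightarrow> real poly" where
  "charpoly P = det (\<chi> i j. (if i = j then [:0, 1:] else 0) - [:P i j:])"

definition eigs :: "('s::finite \<Rightarrow> 's \<Rightarrow> real) \<Rightarrow> real list" where
  "eigs P = rev (sorted_list_of_multiset (proots (charpoly P)))"

text \<open>Finite-dimensional law of the chain X_1,...,X_N with X_1 ~ pi:
  P(X_1 = x_1, ..., X_N = x_N) = pi(x_1) * prod P(x_i, x_{i+1}).\<close>
definition path_prob :: "('s \<Rightarrow> real) \<Rightarrow> ('s \<Rightarrow> 's \<Rightarrow> real) \<Rightarrow> 's list \<Rightarrow> real" where
  "path_prob \<pi> P xs = (case xs of [] \<Rightarrow> 1
      | x # _ \<Rightarrow> \<pi> x * prod_list (map (\<lambda>(a, b). P a b) (zip xs (tl xs))))"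

definition path_sum :: "('s \<Rightarrow> real) \<Rightarrow> 's list \<Rightarrow> real" where
  "path_sum f xs = sum_list (map f xs)"

definition sum_mean :: "('s::finite \<Rightarrow> real) \<Rightarrow> ('s \<Rightarrow> 's \<Rightarrow> real) \<Rightarrow> ('s \<Rightarrow> real) \<Rightarrow> nat \<Rightarrow> real" where
  "sum_mean \<pi> P f N = (\<Sum>xs\<in>{xs. length xs = N}. path_prob \<pi> P xs * path_sum f xs)"

definition sum_var :: "('s::finite \<Rightarrow> real) \<Rightarrow> ('s \<Rightarrow> 's \<Rightarrow> real) \<Rightarrow> ('s \<Rightarrow> real) \<Rightarrow> nat \<Rightarrow> real" where
  "sum_var \<pi> P f N = (\<Sum>xs\<in>{xs. length xs = N}.
       path_prob \<pi> P xs * (path_sum f xs - sum_mean \<pi> P f N)\<^sup>2)"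

definition asym_var :: "('s::finite \<Rightarrow> real) \<Rightarrow> ('s \<Rightarrow> real) \<Rightarrow> ('s \<Rightarrow> 's \<Rightarrow> real) \<Rightarrow> real" where
  "asym_var \<pi> f P = lim (\<lambda>N. sum_var \<pi> P f N / real N)"

definition efficiency_dominates :: "('s::finite \<Rightarrow> real) \<Rightarrow> ('s \<Rightarrow> 's \<Rightarrow> real) \<Rightarrow> ('s \<Rightarrow> 's \<Rightarrow> real) \<Rightarrow> bool" where
  "efficiency_dominates \<pi> P Q \<longleftrightarrow> (\<forall>f. asym_var \<pi> f P \<le> asym_var \<pi> f Q)"

end

theory Submission
  imports Defs
begin

text \<open>
  Reversibility makes D^(1/2) P D^(-1/2), with D = diag(\<pi>), a symmetric matrix. Its eigenvectors
  orthogonal to sqrt(\<pi>) yield an L^2(\<pi>)-orthonormal basis of eigenfunctions \<phi> of P for the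
  functions of \<pi>-mean zero, with eigenvalues \<mu>(\<phi>) in [-1, 1) (irreducibility excludes 1) taken
  from \<lambda>_2, ..., \<lambda>_n. Writing the centred f as sum_\<phi> c(\<phi>) \<phi>, the variance of
  f(X_1) + ... + f(X_N) is sum_\<phi> c(\<phi>)^2 sum_{i,j<N} \<mu>(\<phi>)^|i-j|, hence
  v(f,P) = sum_\<phi> c(\<phi>)^2 (1 + \<mu>(\<phi>)) / (1 - \<mu>(\<phi>)), and the weights c(\<phi>)^2 add up to
  Var_\<pi>(f) whatever the chain. As t \<mapsto> (1 + t) / (1 - t) increases on (-\<infinity>, 1), such a weighted
  average over eigenvalues of P is at most any such average over eigenvalues of Q once the
  former all lie below the latter.
\<close>

subsection \<open>Spectral theorem for symmetric matrices\<close>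

lemma symmetric_matrix_inner_commute:
  fixes M :: "real^'n^'n"
  assumes "transpose M = M"
  shows "(M *v y) \<bullet> x = y \<bullet> (M *v x)"
  by (metis assms dot_lmul_matrix vector_transpose_matrix)

lemma eq_0_if_quadratic_nonpos:
  fixes a c :: real
  assumes "\<And>t. 2 * t * a + t\<^sup>2 * c \<le> 0"
  shows "a = 0"
proof -
  define d where "d = \<bar>c\<bar> + 1"
  have pos: "d > 0" "2 * d + c > 0" unfolding d_def by (auto split: abs_split)
  define t where "t = a / d"
  have "2 * t * a + t\<^sup>2 * c \<le> 0" by (rule assms)
  then have "(2 * t * a + t\<^sup>2 * c) * d\<^sup>2 \<le> 0" by (simp add: mult_nonpos_nonneg)
  moreover have "(2 * t * a + t\<^sup>2 * c) * d\<^sup>2 = a\<^sup>2 * (2 * d + c)"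
    unfolding t_def using pos by (simp add: field_simps power2_eq_square)
  ultimately have "a\<^sup>2 * (2 * d + c) \<le> 0" by simp
  with pos have "a\<^sup>2 \<le> 0" by (simp add: mult_le_0_iff)
  then show ?thesis by simp
qed

lemma quadratic_form_max_on_subspace:
  fixes M :: "real^'n^'n"
  assumes W: "subspace W" and w: "w \<in> W" "w \<noteq> 0"
  obtains x where "x \<in> W" "norm x = 1"
    "\<And>z. z \<in> W \<Longrightarrow> (M *v z) \<bullet> z \<le> ((M *v x) \<bullet> x) * (z \<bullet> z)"
proof -
  define K where "K = W \<inter> sphere 0 1"
  have "compact K"
    unfolding K_def by (intro closed_Int_compact closed_subspace W compact_sphere)
  moreover have "w /\<^sub>R norm w \<in> K"
    unfolding K_def using W w by (auto simp: subspace_scale)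
  moreover have "continuous_on K (\<lambda>x. (M *v x) \<bullet> x)"
    by (intro continuous_on_inner linear_continuous_on[OF matrix_vector_mul_bounded_linear]
        continuous_on_id)
  ultimately obtain x where x: "x \<in> K"
    and max: "\<And>y. y \<in> K \<Longrightarrow> (M *v y) \<bullet> y \<le> (M *v x) \<bullet> x"
    using continuous_attains_sup[of K] by blast
  have "(M *v z) \<bullet> z \<le> ((M *v x) \<bullet> x) * (z \<bullet> z)" if "z \<in> W" for z
  proof (cases "z = 0")
    case False
    then have "z /\<^sub>R norm z \<in> K"
      unfolding K_def using that W by (auto simp: subspace_scale)
    then have "(M *v (z /\<^sub>R norm z)) \<bullet> (z /\<^sub>R norm z) \<le> (M *v x) \<bullet> x" by (rule max)
    then have "((M *v z) \<bullet> z) / (norm z)\<^sup>2 \<le> (M *v x) \<bullet> x"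
      by (simp add: matrix_vector_mult_scaleR power2_eq_square divide_inverse mult_ac)
    then show ?thesis
      using False by (simp add: power2_norm_eq_inner divide_le_eq mult.commute)
  qed simp
  with x that show ?thesis by (auto simp: K_def)
qed

text \<open>The first variation of the Rayleigh quotient at a maximiser.\<close>

lemma symmetric_matrix_maximiser_is_eigenvector:
  fixes M :: "real^'n^'n"
  assumes sym: "transpose M = M" and W: "subspace W" "\<forall>v\<in>W. M *v v \<in> W"
    and x: "x \<in> W" "x \<bullet> x = 1" and \<mu>: "\<mu> = (M *v x) \<bullet> x"
    and max: "\<And>z. z \<in> W \<Longrightarrow> (M *v z) \<bullet> z \<le> \<mu> * (z \<bullet> z)"
  shows "M *v x = \<mu> *\<^sub>R x"
proof -
  have orth: "(M *v x) \<bullet> y = 0" if y: "y \<in> W" "y \<bullet> x = 0" for y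
  proof (rule eq_0_if_quadratic_nonpos)
    fix t
    have "x + t *\<^sub>R y \<in> W" using x y W by (simp add: subspace_add subspace_scale)
    then have "(M *v (x + t *\<^sub>R y)) \<bullet> (x + t *\<^sub>R y) \<le> \<mu> * ((x + t *\<^sub>R y) \<bullet> (x + t *\<^sub>R y))"
      by (rule max)
    moreover have "(M *v y) \<bullet> x = (M *v x) \<bullet> y"
      using symmetric_matrix_inner_commute[OF sym, of y x] by (simp add: inner_commute)
    ultimately show "2 * t * ((M *v x) \<bullet> y) + t\<^sup>2 * ((M *v y) \<bullet> y - \<mu> * (y \<bullet> y)) \<le> 0"
      using x y \<mu>
      by (simp add: matrix_vector_right_distrib matrix_vector_mult_scaleR inner_add_left
          inner_add_right inner_commute algebra_simps power2_eq_square)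
  qed
  define r where "r = M *v x - \<mu> *\<^sub>R x"
  have "r \<in> W" unfolding r_def using W x by (simp add: subspace_diff subspace_scale)
  moreover have rx: "r \<bullet> x = 0" unfolding r_def using x(2) by (simp add: \<mu> inner_diff_left)
  ultimately have "(M *v x) \<bullet> r = 0" by (rule orth)
  with rx have "r \<bullet> r = 0" by (simp add: r_def inner_diff_left inner_commute)
  then show ?thesis unfolding r_def by simp
qed

lemma symmetric_matrix_unit_eigenvector:
  fixes M :: "real^'n^'n"
  assumes sym: "transpose M = M" and W: "subspace W" "\<forall>v\<in>W. M *v v \<in> W"
    and w: "w \<in> W" "w \<noteq> 0"
  obtains x \<mu> where "x \<in> W" "norm x = 1" "M *v x = \<mu> *\<^sub>R x"
proof -
  obtain x where x: "x \<in> W" "norm x = 1"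
    and max: "\<And>z. z \<in> W \<Longrightarrow> (M *v z) \<bullet> z \<le> ((M *v x) \<bullet> x) * (z \<bullet> z)"
    by (rule quadratic_form_max_on_subspace[where M = M, OF W(1) w]) blast+
  have "x \<bullet> x = 1" using x(2) by (simp add: norm_eq_1)
  from symmetric_matrix_maximiser_is_eigenvector[OF sym W x(1) this refl max]
  show ?thesis using that x by blast
qed

lemma subspace_orthogonal_complement: "subspace W \<Longrightarrow> subspace {y \<in> W. y \<bullet> x = 0}"
  by (auto simp: subspace_def inner_add_left)

lemma symmetric_matrix_orthogonal_complement_invariant:
  fixes M :: "real^'n^'n"
  assumes sym: "transpose M = M" and W: "\<forall>v\<in>W. M *v v \<in> W" and x: "M *v x = \<mu> *\<^sub>R x"
  shows "\<forall>y\<in>{y \<in> W. y \<bullet> x = 0}. M *v y \<in> {y \<in> W. y \<bullet> x = 0}"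
proof
  fix y assume "y \<in> {y \<in> W. y \<bullet> x = 0}"
  moreover have "(M *v y) \<bullet> x = \<mu> * (y \<bullet> x)"
    using symmetric_matrix_inner_commute[OF sym, of y x] x by simp
  ultimately show "M *v y \<in> {y \<in> W. y \<bullet> x = 0}" using W by auto
qed

lemma dim_orthogonal_complement_less:
  fixes x :: "'a::euclidean_space"
  assumes W: "subspace W" and x: "x \<in> W" "x \<noteq> 0"
  shows "dim {y \<in> W. y \<bullet> x = 0} < dim W"
proof -
  let ?W' = "{y \<in> W. y \<bullet> x = 0}"
  have "dim ?W' \<le> dim W" "dim W \<le> dim ?W' \<Longrightarrow> ?W' = W"
    using dim_subset[of ?W' W] subspace_dim_equal[of ?W' W] subspace_orthogonal_complement W
    by auto
  moreover have "?W' \<noteq> W"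
  proof
    assume "?W' = W"
    then have "x \<in> ?W'" using x(1) by simp
    with x(2) show False by simp
  qed
  ultimately show ?thesis by linarith
qed

lemma span_insert_orthogonal_complement:
  fixes x :: "'a::euclidean_space"
  assumes W: "subspace W" and x: "x \<in> W" "x \<bullet> x = 1"
    and B: "{y \<in> W. y \<bullet> x = 0} \<subseteq> span B"
  shows "W \<subseteq> span (insert x B)"
proof
  fix v assume "v \<in> W"
  then have "v - (v \<bullet> x) *\<^sub>R x \<in> span B"
    using W x B by (auto simp: subspace_diff subspace_scale inner_diff_left)
  then have "v - (v \<bullet> x) *\<^sub>R x + (v \<bullet> x) *\<^sub>R x \<in> span (insert x B)"
    by (meson span_add span_base span_mono span_scale insertI1 subset_insertI subsetD)
  then show "v \<in> span (insert x B)" by simp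
qed

theorem symmetric_matrix_invariant_subspace_eigenbasis:
  fixes M :: "real^'n^'n"
  assumes sym: "transpose M = M"
  shows "subspace W \<Longrightarrow> \<forall>v\<in>W. M *v v \<in> W \<Longrightarrow>
    \<exists>B. finite B \<and> B \<subseteq> W \<and> pairwise orthogonal B \<and>
      (\<forall>b\<in>B. norm b = 1 \<and> (\<exists>\<mu>. M *v b = \<mu> *\<^sub>R b)) \<and> W \<subseteq> span B"
proof (induction "dim W" arbitrary: W rule: less_induct)
  case less
  show ?case
  proof (cases "W \<subseteq> {0}")
    case True
    then show ?thesis by (intro exI[of _ "{}"]) auto
  next
    case False
    then obtain w where "w \<in> W" "w \<noteq> 0" by auto
    then obtain x \<mu> where x: "x \<in> W" "norm x = 1" "M *v x = \<mu> *\<^sub>R x"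
      by (rule symmetric_matrix_unit_eigenvector[OF sym less.prems]) blast
    have xx: "x \<bullet> x = 1" using x(2) by (simp add: norm_eq_1)
    define W' where "W' = {y \<in> W. y \<bullet> x = 0}"
    have "dim W' < dim W"
      unfolding W'_def using less.prems(1) x(1) xx by (intro dim_orthogonal_complement_less) auto
    moreover have "subspace W'"
      unfolding W'_def using less.prems(1) by (rule subspace_orthogonal_complement)
    moreover have "\<forall>y\<in>W'. M *v y \<in> W'"
      unfolding W'_def using sym less.prems(2) x(3) by (rule symmetric_matrix_orthogonal_complement_invariant)
    ultimately have "\<exists>B. finite B \<and> B \<subseteq> W' \<and> pairwise orthogonal B \<and>
      (\<forall>b\<in>B. norm b = 1 \<and> (\<exists>\<mu>. M *v b = \<mu> *\<^sub>R b)) \<and> W' \<subseteq> span B"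
      by (rule less.hyps)
    then obtain B where B: "finite B" "B \<subseteq> W'" "pairwise orthogonal B"
      "\<forall>b\<in>B. norm b = 1 \<and> (\<exists>\<mu>. M *v b = \<mu> *\<^sub>R b)" "W' \<subseteq> span B"
      by auto
    show ?thesis
    proof (intro exI[of _ "insert x B"] conjI)
      show "pairwise orthogonal (insert x B)"
        using B(2,3) by (auto simp: pairwise_insert W'_def orthogonal_def inner_commute)
      show "W \<subseteq> span (insert x B)"
        using less.prems(1) x(1) xx B(5) unfolding W'_def by (rule span_insert_orthogonal_complement)
      show "\<forall>b\<in>insert x B. norm b = 1 \<and> (\<exists>\<mu>. M *v b = \<mu> *\<^sub>R b)"
        using B(4) x(2,3) by blast
    qed (use B(1,2) x(1) in \<open>auto simp: W'_def\<close>)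
  qed
qed

definition markov_op :: "('s::finite \<Rightarrow> 's \<Rightarrow> real) \<Rightarrow> ('s \<Rightarrow> real) \<Rightarrow> 's \<Rightarrow> real" where
  "markov_op P g x = (\<Sum>y\<in>UNIV. P x y * g y)"

lemma markov_op_add: "markov_op P (\<lambda>y. g y + h y) x = markov_op P g x + markov_op P h x"
  by (simp add: markov_op_def distrib_left sum.distrib)

lemma markov_op_scale: "markov_op P (\<lambda>y. a * g y) x = a * markov_op P g x"
  by (simp add: markov_op_def sum_distrib_left mult.left_commute)

lemma markov_op_sum: "markov_op P (\<lambda>y. \<Sum>i\<in>I. g i y) x = (\<Sum>i\<in>I. markov_op P (g i) x)"
  unfolding markov_op_def sum_distrib_left by (rule sum.swap)

lemma markov_op_const: "transition_matrix P \<Longrightarrow> markov_op P (\<lambda>_. c) x = c"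
  by (simp add: markov_op_def transition_matrix_def sum_distrib_right[symmetric])

lemma ex_max_finite_type:
  fixes f :: "'a::finite \<Rightarrow> 'b::linorder"
  obtains x where "\<And>y. f y \<le> f x"
proof -
  have "Max (range f) \<in> range f" by (intro Max_in) auto
  then obtain x where "Max (range f) = f x" by blast
  moreover have "f y \<le> Max (range f)" for y by (intro Max_ge) auto
  ultimately have "f y \<le> f x" for y by simp
  then show ?thesis by (rule that)
qed

lemma transition_matrix_eigenvalue_abs_le_1:
  assumes P: "transition_matrix P" and v: "v \<noteq> (\<lambda>_. 0)"
    and eig: "\<And>x. markov_op P v x = \<mu> * v x"
  shows "\<bar>\<mu>\<bar> \<le> 1"
proof -
  obtain x where max: "\<And>y. \<bar>v y\<bar> \<le> \<bar>v x\<bar>"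
    using ex_max_finite_type[of "\<lambda>y. \<bar>v y\<bar>"] by blast
  have "\<bar>v x\<bar> > 0"
  proof (rule ccontr)
    assume "\<not> \<bar>v x\<bar> > 0"
    then have "v y = 0" for y using max[of y] by simp
    then have "v = (\<lambda>_. 0)" by (rule ext)
    with v show False ..
  qed
  have "\<bar>\<mu>\<bar> * \<bar>v x\<bar> = \<bar>\<Sum>y\<in>UNIV. P x y * v y\<bar>"
    using eig[of x] by (simp add: markov_op_def abs_mult)
  also have "\<dots> \<le> (\<Sum>y\<in>UNIV. \<bar>P x y * v y\<bar>)" by (rule sum_abs)
  also have "\<dots> \<le> (\<Sum>y\<in>UNIV. P x y * \<bar>v x\<bar>)"
  proof (intro sum_mono)
    fix y
    have "P x y \<ge> 0" using P by (simp add: transition_matrix_def)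
    then show "\<bar>P x y * v y\<bar> \<le> P x y * \<bar>v x\<bar>" by (simp add: abs_mult mult_left_mono max)
  qed
  also have "\<dots> = \<bar>v x\<bar>"
    using P by (simp add: transition_matrix_def sum_distrib_right[symmetric])
  finally show ?thesis using \<open>\<bar>v x\<bar> > 0\<close> by simp
qed

lemma det_eq_0_iff_nontrivial_kernel:
  fixes A :: "real^'n^'n"
  shows "det A = 0 \<longleftrightarrow> (\<exists>v. v \<noteq> 0 \<and> A *v v = 0)"
proof -
  have "det A \<noteq> 0 \<longleftrightarrow> (\<forall>v. A *v v = 0 \<longrightarrow> v = 0)"
    unfolding invertible_det_nz[symmetric] invertible_left_inverse matrix_left_invertible_ker ..
  then show ?thesis by blast
qed

lemma ex_nonzero_vec_iff:
  "(\<exists>w::'a::zero^'n. w \<noteq> 0 \<and> R (($) w)) \<longleftrightarrow> (\<exists>v. v \<noteq> (\<lambda>_. 0) \<and> R v)"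
proof
  assume "\<exists>w::'a^'n. w \<noteq> 0 \<and> R (($) w)"
  then obtain w :: "'a^'n" where w: "w \<noteq> 0" "R (($) w)" by blast
  have "($) w \<noteq> (\<lambda>_. 0)"
  proof
    assume "($) w = (\<lambda>_. 0)"
    then have "w $ i = 0 $ i" for i by (metis zero_index)
    with w(1) show False by (simp add: vec_eq_iff)
  qed
  with w(2) show "\<exists>v. v \<noteq> (\<lambda>_. 0) \<and> R v" by blast
next
  assume "\<exists>v. v \<noteq> (\<lambda>_. 0) \<and> R v"
  then obtain v where v: "v \<noteq> (\<lambda>_. 0)" "R v" by blast
  have nth: "($) (\<chi> x. v x) = v" by (rule ext) simp
  have "(\<chi> x. v x) \<noteq> (0 :: 'a^'n)"
  proof
    assume "(\<chi> x. v x) = (0 :: 'a^'n)"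
    then have "($) (\<chi> x. v x) = (\<lambda>_. 0)" by (simp add: fun_eq_iff)
    with v(1) nth show False by simp
  qed
  with v(2) nth show "\<exists>w::'a^'n. w \<noteq> 0 \<and> R (($) w)" by metis
qed

lemma poly_charpoly_eq_0_iff:
  fixes P :: "'s::finite \<Rightarrow> 's \<Rightarrow> real"
  shows "poly (charpoly P) \<mu> = 0 \<longleftrightarrow> (\<exists>v. v \<noteq> (\<lambda>_. 0) \<and> (\<forall>x. markov_op P v x = \<mu> * v x))"
proof -
  define A :: "real^'s^'s" where "A = (\<chi> i j. (if i = j then \<mu> else 0) - P i j)"
  have "(A *v w) $ x = \<mu> * w $ x - markov_op P (($) w) x" for w x
  proof -
    have "(A *v w) $ x = (\<Sum>j\<in>UNIV. (if x = j then \<mu> * w $ j else 0) - P x j * w $ j)"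
      by (auto simp: A_def matrix_vector_mult_def algebra_simps intro!: sum.cong)
    then show ?thesis by (simp add: sum_subtractf markov_op_def)
  qed
  then have kernel: "A *v w = 0 \<longleftrightarrow> (\<forall>x. markov_op P (($) w) x = \<mu> * w $ x)" for w
    by (auto simp: vec_eq_iff)
  have "poly (charpoly P) \<mu> = det A"
    unfolding charpoly_def det_def A_def by (auto simp: poly_sum poly_prod intro!: sum.cong prod.cong)
  then have "poly (charpoly P) \<mu> = 0 \<longleftrightarrow> (\<exists>w::real^'s. w \<noteq> 0 \<and> (\<forall>x. markov_op P (($) w) x = \<mu> * w $ x))"
    by (simp add: det_eq_0_iff_nontrivial_kernel kernel)
  also have "\<dots> \<longleftrightarrow> (\<exists>v. v \<noteq> (\<lambda>_. 0) \<and> (\<forall>x. markov_op P v x = \<mu> * v x))"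
    by (rule ex_nonzero_vec_iff)
  finally show ?thesis .
qed

lemma charpoly_nonzero:
  assumes "transition_matrix P"
  shows "charpoly P \<noteq> 0"
proof
  assume "charpoly P = 0"
  then obtain v where "v \<noteq> (\<lambda>_. 0)" "\<And>x. markov_op P v x = 2 * v x"
    using poly_charpoly_eq_0_iff[of P 2] by auto
  with transition_matrix_eigenvalue_abs_le_1[OF assms] show False by fastforce
qed

lemma degree_charpoly_le: "degree (charpoly P) \<le> CARD('s)"
  for P :: "'s::finite \<Rightarrow> 's \<Rightarrow> real"
  unfolding charpoly_def det_def
proof (intro degree_sum_le)
  fix p :: "'s \<Rightarrow> 's"
  have "degree (\<Prod>i\<in>UNIV. (if i = p i then [:0, 1:] else 0) - [:P i (p i):]) \<le> (\<Sum>i\<in>(UNIV::'s set). 1)"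
    by (intro order_trans[OF degree_prod_sum_le] sum_mono order_trans[OF degree_diff_le_max]) auto
  then show "degree (of_int (sign p) *
      (\<Prod>i\<in>UNIV. ((\<chi> i j. (if i = j then [:0, 1:] else 0) - [:P i j:]) :: real poly^'s^'s) $ i $ p i))
    \<le> CARD('s)"
    by (intro order_trans[OF degree_mult_le]) simp
qed simp

lemma length_eigs_le: "length (eigs P) \<le> CARD('s)"
  for P :: "'s::finite \<Rightarrow> 's \<Rightarrow> real"
proof -
  have "length (eigs P) = size (proots (charpoly P))"
    unfolding eigs_def by (metis length_rev size_mset mset_sorted_list_of_multiset)
  also have "\<dots> \<le> CARD('s)" by (rule order_trans[OF size_proots_le degree_charpoly_le])
  finally show ?thesis .
qed

lemma eigs_nth_antimono:
  assumes "i \<le> j" "j < length (eigs P)"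
  shows "eigs P ! j \<le> eigs P ! i"
proof -
  let ?l = "sorted_list_of_multiset (proots (charpoly P))"
  have "eigs P ! j = ?l ! (length ?l - Suc j)" "eigs P ! i = ?l ! (length ?l - Suc i)"
    using assms unfolding eigs_def by (auto simp: rev_nth)
  moreover have "?l ! (length ?l - Suc j) \<le> ?l ! (length ?l - Suc i)"
    using assms unfolding eigs_def by (intro sorted_nth_mono) auto
  ultimately show ?thesis by simp
qed

lemma set_eigs:
  assumes "transition_matrix P"
  shows "set (eigs P) = {\<mu>. poly (charpoly P) \<mu> = 0}"
  unfolding eigs_def using charpoly_nonzero[OF assms] by simp

text \<open>Since \<open>eigs P\<close> is sorted downwards and contains 1, its tail holds every eigenvalue below 1.\<close>

lemma eigenvalue_in_tl_eigs:
  assumes P: "transition_matrix P" and "v \<noteq> (\<lambda>_. 0)" "\<And>x. markov_op P v x = \<mu> * v x" and "\<mu> < 1"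
  shows "\<mu> \<in> set (tl (eigs P))"
proof -
  have "\<mu> \<in> set (eigs P)" using assms(2,3) poly_charpoly_eq_0_iff set_eigs[OF P] by blast
  moreover have "(\<lambda>_. 1) \<noteq> (\<lambda>_::'s. 0::real)" "\<And>x. markov_op P (\<lambda>_. 1) x = 1 * 1"
    using P by (auto simp: markov_op_const fun_eq_iff)
  then have "1 \<in> set (eigs P)" using poly_charpoly_eq_0_iff set_eigs[OF P] by blast
  then obtain k where "k < length (eigs P)" "eigs P ! k = 1" by (auto simp: in_set_conv_nth)
  then have "eigs P ! 0 \<ge> 1" using eigs_nth_antimono[of 0 k P] by simp
  moreover obtain e es where "eigs P = e # es" using \<open>\<mu> \<in> set (eigs P)\<close> by (cases "eigs P") auto
  ultimately show ?thesis using \<open>\<mu> < 1\<close> by auto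
qed

lemma tl_eigs_le_if_nth_le:
  fixes P Q :: "'s::finite \<Rightarrow> 's \<Rightarrow> real"
  assumes le: "\<forall>i j. 1 \<le> i \<and> i < CARD('s) \<and> 1 \<le> j \<and> j < CARD('s) \<longrightarrow> eigs P ! i \<le> eigs Q ! j"
    and "\<mu> \<in> set (tl (eigs P))" "\<nu> \<in> set (tl (eigs Q))"
  shows "\<mu> \<le> \<nu>"
proof -
  from assms(2) obtain i where "i < length (tl (eigs P))" "tl (eigs P) ! i = \<mu>"
    by (auto simp: in_set_conv_nth)
  then have i: "Suc i < length (eigs P)" "eigs P ! Suc i = \<mu>" by (auto simp: nth_tl)
  from assms(3) obtain j where "j < length (tl (eigs Q))" "tl (eigs Q) ! j = \<nu>"
    by (auto simp: in_set_conv_nth)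
  then have j: "Suc j < length (eigs Q)" "eigs Q ! Suc j = \<nu>" by (auto simp: nth_tl)
  have "Suc i < CARD('s)" "Suc j < CARD('s)"
    using i(1) j(1) length_eigs_le[of P] length_eigs_le[of Q] by linarith+
  then show ?thesis using le[rule_format, of "Suc i" "Suc j"] i(2) j(2) by simp
qed

lemma mpow_nonneg:
  assumes "transition_matrix P"
  shows "mpow P k x y \<ge> 0"
  using assms by (induction k arbitrary: y) (auto simp: transition_matrix_def intro!: sum_nonneg)

lemma harmonic_max_propagates:
  assumes P: "transition_matrix P" and harm: "\<And>x. markov_op P \<phi> x = \<phi> x"
    and max: "\<And>y. \<phi> y \<le> \<phi> z" and "P z y > 0"
  shows "\<phi> y = \<phi> z"
proof -
  have "(\<Sum>w\<in>UNIV. P z w * (\<phi> z - \<phi> w)) = \<phi> z * (\<Sum>w\<in>UNIV. P z w) - markov_op P \<phi> z"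
    by (simp add: markov_op_def algebra_simps sum_subtractf sum_distrib_left)
  also have "\<dots> = 0" using P harm[of z] by (simp add: transition_matrix_def)
  finally have "(\<Sum>w\<in>UNIV. P z w * (\<phi> z - \<phi> w)) = 0" .
  moreover have "P z w * (\<phi> z - \<phi> w) \<ge> 0" for w
    using P max[of w] by (simp add: transition_matrix_def)
  ultimately have "P z y * (\<phi> z - \<phi> y) = 0" by (simp add: sum_nonneg_eq_0_iff)
  with \<open>P z y > 0\<close> show ?thesis by simp
qed

lemma irreducible_harmonic_const:
  assumes P: "transition_matrix P" and irr: "irreducible_chain P"
    and harm: "\<And>x. markov_op P \<phi> x = \<phi> x"
  shows "\<phi> y = \<phi> z"
proof -
  obtain x where max: "\<And>y. \<phi> y \<le> \<phi> x" using ex_max_finite_type[of \<phi>] by blast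
  have reach: "mpow P k x y > 0 \<Longrightarrow> \<phi> y = \<phi> x" for k y
  proof (induction k arbitrary: y)
    case (Suc k)
    have "\<exists>w. mpow P k x w * P w y > 0"
    proof (rule ccontr)
      assume "\<not> ?thesis"
      then have "(\<Sum>w\<in>UNIV. mpow P k x w * P w y) \<le> 0" by (intro sum_nonpos) (simp add: not_less)
      with Suc.prems show False by simp
    qed
    then obtain w where "mpow P k x w * P w y > 0" by blast
    moreover have "mpow P k x w \<ge> 0" "P w y \<ge> 0"
      using mpow_nonneg[OF P] P by (auto simp: transition_matrix_def)
    ultimately have "mpow P k x w > 0" "P w y > 0" by (auto simp: zero_less_mult_iff)
    with Suc.IH have "\<phi> w = \<phi> x" by simp
    with max have "\<And>v. \<phi> v \<le> \<phi> w" by simp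
    with \<open>\<phi> w = \<phi> x\<close> show ?case using harmonic_max_propagates[OF P harm _ \<open>P w y > 0\<close>] by simp
  qed (simp split: if_splits)
  have "\<phi> v = \<phi> x" for v
    using irr reach unfolding irreducible_chain_def by blast
  from this[of y] this[of z] show ?thesis by simp
qed

subsection \<open>The eigenfunctions of a reversible chain\<close>

definition weighted_inner :: "('s::finite \<Rightarrow> real) \<Rightarrow> ('s \<Rightarrow> real) \<Rightarrow> ('s \<Rightarrow> real) \<Rightarrow> real" where
  "weighted_inner \<pi> g h = (\<Sum>x\<in>UNIV. \<pi> x * g x * h x)"

definition l2_embed :: "('s::finite \<Rightarrow> real) \<Rightarrow> ('s \<Rightarrow> real) \<Rightarrow> real^'s" where
  "l2_embed \<pi> g = (\<chi> x. sqrt (\<pi> x) * g x)"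

definition symmetrized :: "('s::finite \<Rightarrow> real) \<Rightarrow> ('s \<Rightarrow> 's \<Rightarrow> real) \<Rightarrow> real^'s^'s" where
  "symmetrized \<pi> P = (\<chi> x y. sqrt (\<pi> x) * P x y / sqrt (\<pi> y))"

context
  fixes \<pi> :: "'s::finite \<Rightarrow> real"
  assumes pos: "\<And>x. \<pi> x > 0"
begin

lemma inner_l2_embed: "l2_embed \<pi> g \<bullet> l2_embed \<pi> h = weighted_inner \<pi> g h"
  unfolding l2_embed_def weighted_inner_def inner_vec_def
proof (intro sum.cong refl)
  fix x
  have "sqrt (\<pi> x) * sqrt (\<pi> x) = \<pi> x" using pos[of x] by simp
  then show "(\<chi> x. sqrt (\<pi> x) * g x) $ x \<bullet> (\<chi> x. sqrt (\<pi> x) * h x) $ x = \<pi> x * g x * h x"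
    by (simp add: mult_ac)
qed

lemma l2_embed_inverse: "l2_embed \<pi> (\<lambda>x. v $ x / sqrt (\<pi> x)) = v"
proof -
  have "sqrt (\<pi> x) \<noteq> 0" for x using pos[of x] by simp
  then show ?thesis by (simp add: l2_embed_def vec_eq_iff)
qed

lemma l2_embed_inject: "l2_embed \<pi> g = l2_embed \<pi> h \<longleftrightarrow> g = h"
proof -
  have "sqrt (\<pi> x) \<noteq> 0" for x using pos[of x] by simp
  then show ?thesis by (simp add: l2_embed_def vec_eq_iff fun_eq_iff)
qed

lemma l2_embed_sum:
  "l2_embed \<pi> (\<lambda>x. \<Sum>i\<in>I. c i * g i x) = (\<Sum>i\<in>I. c i *\<^sub>R l2_embed \<pi> (g i))"
  by (simp add: l2_embed_def vec_eq_iff sum_component sum_distrib_left mult.left_commute)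

lemma scaleR_l2_embed: "c *\<^sub>R l2_embed \<pi> g = l2_embed \<pi> (\<lambda>x. c * g x)"
  by (simp add: l2_embed_def vec_eq_iff mult.left_commute)

lemma symmetrized_l2_embed: "symmetrized \<pi> P *v l2_embed \<pi> g = l2_embed \<pi> (markov_op P g)"
proof -
  have "sqrt (\<pi> y) \<noteq> 0" for y using pos[of y] by simp
  then have "sqrt (\<pi> x) * P x y / sqrt (\<pi> y) * (sqrt (\<pi> y) * g y) = sqrt (\<pi> x) * (P x y * g y)" for x y
    by simp
  then show ?thesis
    by (simp add: symmetrized_def l2_embed_def markov_op_def matrix_vector_mult_def vec_eq_iff
        sum_distrib_left)
qed

lemma transpose_symmetrized:
  assumes "reversible \<pi> P"
  shows "transpose (symmetrized \<pi> P) = symmetrized \<pi> P"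
proof -
  have "sqrt (\<pi> y) * P y x / sqrt (\<pi> x) = sqrt (\<pi> x) * P x y / sqrt (\<pi> y)" for x y
  proof -
    have sq: "sqrt (\<pi> z) * sqrt (\<pi> z) = \<pi> z" for z using pos[of z] by simp
    have "sqrt (\<pi> y) * (sqrt (\<pi> y) * P y x) = sqrt (\<pi> x) * (sqrt (\<pi> x) * P x y)"
      unfolding mult.assoc[symmetric] sq using assms by (simp add: reversible_def)
    with pos[of x] pos[of y] show ?thesis by (simp add: field_simps)
  qed
  then show ?thesis by (simp add: transpose_def symmetrized_def vec_eq_iff)
qed

lemma symmetrized_eigenbasis:
  assumes P: "transition_matrix P" "reversible \<pi> P"
  shows "\<exists>B. finite B \<and> pairwise orthogonal B \<and>
    (\<forall>b\<in>B. norm b = 1 \<and> b \<bullet> l2_embed \<pi> (\<lambda>_. 1) = 0 \<and> (\<exists>t. symmetrized \<pi> P *v b = t *\<^sub>R b)) \<and>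
    {v. v \<bullet> l2_embed \<pi> (\<lambda>_. 1) = 0} \<subseteq> span B"
proof -
  let ?A = "symmetrized \<pi> P" and ?one = "l2_embed \<pi> (\<lambda>_. 1)"
  define W where "W = {v. v \<bullet> ?one = 0}"
  have "markov_op P (\<lambda>_. 1) = (\<lambda>_. 1)" using P(1) by (simp add: fun_eq_iff markov_op_const)
  then have "?A *v ?one = ?one" by (simp add: symmetrized_l2_embed)
  then have "\<forall>v\<in>W. ?A *v v \<in> W"
    using symmetric_matrix_inner_commute[OF transpose_symmetrized[OF P(2)]] by (simp add: W_def)
  moreover have "subspace W" unfolding W_def subspace_def by (simp add: inner_add_left)
  ultimately have "\<exists>B. finite B \<and> B \<subseteq> W \<and> pairwise orthogonal B \<and>
      (\<forall>b\<in>B. norm b = 1 \<and> (\<exists>t. ?A *v b = t *\<^sub>R b)) \<and> W \<subseteq> span B"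
    by (intro symmetric_matrix_invariant_subspace_eigenbasis[OF transpose_symmetrized[OF P(2)]])
  then show ?thesis unfolding W_def by blast
qed

text \<open>The eigenfunctions are the eigenvectors of \<open>symmetrized \<pi> P\<close>, pulled back along the isometry \<open>l2_embed \<pi>\<close>.\<close>

lemma reversible_eigenfunction_basis:
  assumes P: "transition_matrix P" "reversible \<pi> P"
  obtains \<Phi> :: "('s \<Rightarrow> real) set" and \<mu> where "finite \<Phi>"
    "\<And>\<phi> \<psi>. \<phi> \<in> \<Phi> \<Longrightarrow> \<psi> \<in> \<Phi> \<Longrightarrow> weighted_inner \<pi> \<phi> \<psi> = (if \<phi> = \<psi> then 1 else 0)"
    "\<And>\<phi> x. \<phi> \<in> \<Phi> \<Longrightarrow> markov_op P \<phi> x = \<mu> \<phi> * \<phi> x"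
    "\<And>\<phi>. \<phi> \<in> \<Phi> \<Longrightarrow> weighted_inner \<pi> \<phi> (\<lambda>_. 1) = 0"
    "\<And>h. weighted_inner \<pi> h (\<lambda>_. 1) = 0 \<Longrightarrow> h = (\<lambda>x. \<Sum>\<phi>\<in>\<Phi>. weighted_inner \<pi> h \<phi> * \<phi> x)"
proof -
  let ?A = "symmetrized \<pi> P"
  obtain B where B: "finite B" "pairwise orthogonal B" "\<And>b. b \<in> B \<Longrightarrow> norm b = 1"
    "\<And>b. b \<in> B \<Longrightarrow> b \<bullet> l2_embed \<pi> (\<lambda>_. 1) = 0" "\<And>b. b \<in> B \<Longrightarrow> \<exists>t. ?A *v b = t *\<^sub>R b"
    "{v. v \<bullet> l2_embed \<pi> (\<lambda>_. 1) = 0} \<subseteq> span B"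
    using symmetrized_eigenbasis[OF P] by blast
  define pull where "pull b = (\<lambda>x. b $ x / sqrt (\<pi> x))" for b :: "real^'s"
  have embed_pull: "l2_embed \<pi> (pull b) = b" for b unfolding pull_def by (rule l2_embed_inverse)
  have inj: "inj_on pull B" by (metis embed_pull inj_onI)
  have inner_pull: "weighted_inner \<pi> (pull b) (pull b') = b \<bullet> b'" for b b'
    using inner_l2_embed embed_pull by metis
  have orthonormal: "b \<bullet> b' = (if b = b' then 1 else 0)" if "b \<in> B" "b' \<in> B" for b b'
    using that B(2,3) by (auto simp: pairwise_def orthogonal_def norm_eq_1)
  define \<mu> where "\<mu> \<phi> = (SOME t. ?A *v l2_embed \<pi> \<phi> = t *\<^sub>R l2_embed \<pi> \<phi>)" for \<phi>
  have eig: "markov_op P (pull b) x = \<mu> (pull b) * pull b x" if "b \<in> B" for b x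
  proof -
    have "l2_embed \<pi> (markov_op P (pull b)) = ?A *v l2_embed \<pi> (pull b)"
      by (rule symmetrized_l2_embed[symmetric])
    also have "\<dots> = \<mu> (pull b) *\<^sub>R l2_embed \<pi> (pull b)"
      unfolding \<mu>_def embed_pull using B(5)[OF that] by (rule someI_ex)
    also have "\<dots> = l2_embed \<pi> (\<lambda>x. \<mu> (pull b) * pull b x)" by (rule scaleR_l2_embed)
    finally show ?thesis by (simp add: l2_embed_inject fun_eq_iff)
  qed
  have expand: "h = (\<lambda>x. \<Sum>\<phi>\<in>pull ` B. weighted_inner \<pi> h \<phi> * \<phi> x)"
    if "weighted_inner \<pi> h (\<lambda>_. 1) = 0" for h
  proof -
    have "l2_embed \<pi> h \<in> span B" using that B(6) by (auto simp: inner_l2_embed)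
    then have "l2_embed \<pi> h = (\<Sum>b\<in>B. (l2_embed \<pi> h \<bullet> b) *\<^sub>R b)"
      using orthonormal_basis_expand[OF B(2) B(3) _ B(1)] by simp
    also have "\<dots> = l2_embed \<pi> (\<lambda>x. \<Sum>\<phi>\<in>pull ` B. weighted_inner \<pi> h \<phi> * \<phi> x)"
      by (simp add: l2_embed_sum sum.reindex[OF inj] embed_pull inner_l2_embed[symmetric])
    finally show ?thesis by (simp add: l2_embed_inject)
  qed
  show ?thesis
  proof (rule that[of "pull ` B" \<mu>])
    show "weighted_inner \<pi> \<phi> (\<lambda>_. 1) = 0" if "\<phi> \<in> pull ` B" for \<phi>
      using that B(4) by (auto simp: inner_l2_embed[symmetric] embed_pull)
  qed (use B(1) inj eig expand in \<open>auto simp: inner_pull orthonormal inj_on_eq_iff\<close>)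
qed

end

lemma irreducible_eigenvalue_ne_1:
  assumes pos: "\<And>x. \<pi> x > 0" and P: "transition_matrix P" "irreducible_chain P"
    and "\<phi> \<noteq> (\<lambda>_. 0)" "\<And>x. markov_op P \<phi> x = \<mu> * \<phi> x"
    and orth: "weighted_inner \<pi> \<phi> (\<lambda>_. 1) = 0"
  shows "\<mu> \<noteq> 1"
proof
  assume "\<mu> = 1"
  define c where "c = \<phi> undefined"
  with assms \<open>\<mu> = 1\<close> have "\<phi> = (\<lambda>_. c)" using irreducible_harmonic_const[OF P] by auto
  with orth have "(\<Sum>y\<in>UNIV. \<pi> y) * c = 0" by (simp add: weighted_inner_def sum_distrib_right)
  moreover have "(\<Sum>y\<in>UNIV. \<pi> y) > 0" using pos by (simp add: sum_pos)
  ultimately have "\<phi> = (\<lambda>_. 0)" using \<open>\<phi> = (\<lambda>_. c)\<close> by simp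
  with \<open>\<phi> \<noteq> (\<lambda>_. 0)\<close> show False by simp
qed

lemma irreducible_reversible_eigenfunction_basis:
  assumes pos: "\<And>x. \<pi> x > 0" and P: "transition_matrix P" "irreducible_chain P" "reversible \<pi> P"
  obtains \<Phi> :: "('s::finite \<Rightarrow> real) set" and \<mu> where "finite \<Phi>"
    "\<And>\<phi> \<psi>. \<phi> \<in> \<Phi> \<Longrightarrow> \<psi> \<in> \<Phi> \<Longrightarrow> weighted_inner \<pi> \<phi> \<psi> = (if \<phi> = \<psi> then 1 else 0)"
    "\<And>\<phi> x. \<phi> \<in> \<Phi> \<Longrightarrow> markov_op P \<phi> x = \<mu> \<phi> * \<phi> x"
    "\<And>\<phi>. \<phi> \<in> \<Phi> \<Longrightarrow> \<bar>\<mu> \<phi>\<bar> \<le> 1 \<and> \<mu> \<phi> \<noteq> 1 \<and> \<mu> \<phi> \<in> set (tl (eigs P))"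
    "\<And>h. weighted_inner \<pi> h (\<lambda>_. 1) = 0 \<Longrightarrow> h = (\<lambda>x. \<Sum>\<phi>\<in>\<Phi>. weighted_inner \<pi> h \<phi> * \<phi> x)"
proof (rule reversible_eigenfunction_basis[OF pos P(1,3)])
  fix \<Phi> :: "('s \<Rightarrow> real) set" and \<mu>
  assume \<Phi>: "finite \<Phi>"
    and orthonormal: "\<And>\<phi> \<psi>. \<phi> \<in> \<Phi> \<Longrightarrow> \<psi> \<in> \<Phi> \<Longrightarrow> weighted_inner \<pi> \<phi> \<psi> = (if \<phi> = \<psi> then 1 else 0)"
    and eig: "\<And>\<phi> x. \<phi> \<in> \<Phi> \<Longrightarrow> markov_op P \<phi> x = \<mu> \<phi> * \<phi> x"
    and orth: "\<And>\<phi>. \<phi> \<in> \<Phi> \<Longrightarrow> weighted_inner \<pi> \<phi> (\<lambda>_. 1) = 0"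
    and expand: "\<And>h. weighted_inner \<pi> h (\<lambda>_. 1) = 0 \<Longrightarrow> h = (\<lambda>x. \<Sum>\<phi>\<in>\<Phi>. weighted_inner \<pi> h \<phi> * \<phi> x)"
  have \<mu>: "\<bar>\<mu> \<phi>\<bar> \<le> 1 \<and> \<mu> \<phi> \<noteq> 1 \<and> \<mu> \<phi> \<in> set (tl (eigs P))" if "\<phi> \<in> \<Phi>" for \<phi>
  proof -
    have nonzero: "\<phi> \<noteq> (\<lambda>_. 0)" using orthonormal[OF that that] by (auto simp: weighted_inner_def)
    have bound: "\<bar>\<mu> \<phi>\<bar> \<le> 1"
      by (rule transition_matrix_eigenvalue_abs_le_1[OF P(1) nonzero eig[OF that]])
    have ne: "\<mu> \<phi> \<noteq> 1"
      by (rule irreducible_eigenvalue_ne_1[OF pos P(1,2) nonzero eig[OF that] orth[OF that]])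
    have "\<mu> \<phi> \<in> set (tl (eigs P))"
      using bound ne by (intro eigenvalue_in_tl_eigs[OF P(1) nonzero eig[OF that]]) simp
    with bound ne show ?thesis by simp
  qed
  show thesis by (rule that[OF \<Phi> orthonormal eig \<mu> expand])
qed

definition path_weight :: "('s \<Rightarrow> 's \<Rightarrow> real) \<Rightarrow> 's \<Rightarrow> 's list \<Rightarrow> real" where
  "path_weight P x xs = prod_list (map (\<lambda>(a, b). P a b) (zip (x # xs) xs))"

text \<open>\<open>path_exp P F n x\<close> is the expectation of \<open>F [X\<^sub>0, \<dots>, X\<^sub>n]\<close> for the chain started at \<open>X\<^sub>0 = x\<close>.\<close>

definition path_exp :: "('s::finite \<Rightarrow> 's \<Rightarrow> real) \<Rightarrow> ('s list \<Rightarrow> real) \<Rightarrow> nat \<Rightarrow> 's \<Rightarrow> real" where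
  "path_exp P F n x = (\<Sum>xs | length xs = n. path_weight P x xs * F (x # xs))"

lemma path_weight_Nil [simp]: "path_weight P x [] = 1"
  by (simp add: path_weight_def)

lemma path_weight_Cons [simp]: "path_weight P x (y # xs) = P x y * path_weight P y xs"
  by (simp add: path_weight_def)

lemma path_prob_Cons: "path_prob \<pi> P (x # xs) = \<pi> x * path_weight P x xs"
  by (simp add: path_prob_def path_weight_def)

lemma path_sum_Nil [simp]: "path_sum f [] = 0"
  by (simp add: path_sum_def)

lemma path_sum_Cons [simp]: "path_sum f (x # xs) = f x + path_sum f xs"
  by (simp add: path_sum_def)

lemma sum_lists_length_Suc:
  "(\<Sum>xs | length xs = Suc n. F xs) = (\<Sum>y\<in>UNIV. \<Sum>xs | length xs = n. F (y # xs :: 's::finite list))"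
proof -
  have eq: "{xs :: 's list. length xs = Suc n} = (\<lambda>(xs, y). y # xs) ` ({xs. length xs = n} \<times> UNIV)"
    using lists_length_Suc_eq[of "UNIV :: 's set" n] by simp
  have inj: "inj_on (\<lambda>(xs, y). y # xs) ({xs :: 's list. length xs = n} \<times> UNIV)"
    by (auto simp: inj_on_def)
  have "(\<Sum>xs | length xs = Suc n. F xs) = (\<Sum>(xs, y)\<in>{xs. length xs = n} \<times> UNIV. F (y # xs))"
    unfolding eq by (subst sum.reindex[OF inj]) (simp add: case_prod_unfold)
  also have "\<dots> = (\<Sum>xs | length xs = n. \<Sum>y\<in>UNIV. F (y # xs))"
    by (rule sum.cartesian_product[symmetric])
  also have "\<dots> = (\<Sum>y\<in>UNIV. \<Sum>xs | length xs = n. F (y # xs))"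
    by (rule sum.swap)
  finally show ?thesis .
qed

lemma path_exp_0 [simp]: "path_exp P F 0 x = F [x]"
  by (simp add: path_exp_def)

text \<open>The Markov property: condition on the first step.\<close>

lemma path_exp_Suc: "path_exp P F (Suc n) x = markov_op P (path_exp P (\<lambda>ys. F (x # ys)) n) x"
  by (simp add: path_exp_def markov_op_def sum_lists_length_Suc sum_distrib_left mult.assoc)

lemma path_exp_add: "path_exp P (\<lambda>xs. F xs + G xs) n x = path_exp P F n x + path_exp P G n x"
  by (simp add: path_exp_def distrib_left sum.distrib)

lemma path_exp_scale: "path_exp P (\<lambda>xs. a * F xs) n x = a * path_exp P F n x"
  by (simp add: path_exp_def sum_distrib_left mult.left_commute)

lemma path_exp_const:
  assumes "transition_matrix P"
  shows "path_exp P (\<lambda>_. c) n = (\<lambda>_. c)"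
proof (induction n)
  case (Suc n)
  show ?case by (rule ext) (simp add: path_exp_Suc Suc.IH markov_op_const assms)
qed (simp add: fun_eq_iff)

lemma sum_path_prob_Suc:
  "(\<Sum>xs | length xs = Suc n. path_prob \<pi> P xs * F xs) = (\<Sum>x\<in>UNIV. \<pi> x * path_exp P F n x)"
  by (simp add: sum_lists_length_Suc path_prob_Cons path_exp_def sum_distrib_left mult.assoc)

lemma sum_path_prob_eq_1:
  assumes "prob_dist \<pi>" "transition_matrix P"
  shows "(\<Sum>xs | length xs = N. path_prob \<pi> P xs) = 1"
proof (cases N)
  case 0
  then show ?thesis by (simp add: path_prob_def)
next
  case (Suc n)
  then show ?thesis
    using sum_path_prob_Suc[where F = "\<lambda>_. 1" and n = n and \<pi> = \<pi> and P = P] assms(1)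
    by (simp add: path_exp_const[OF assms(2)] prob_dist_def)
qed

lemma path_exp_path_sum_Suc:
  assumes "transition_matrix P"
  shows "path_exp P (path_sum f) (Suc n) = (\<lambda>x. f x + markov_op P (path_exp P (path_sum f) n) x)"
proof
  fix x
  have "path_exp P (\<lambda>ys. f x + path_sum f ys) n = (\<lambda>y. f x + path_exp P (path_sum f) n y)"
    using assms by (simp add: fun_eq_iff path_exp_add path_exp_const)
  then show "path_exp P (path_sum f) (Suc n) x = f x + markov_op P (path_exp P (path_sum f) n) x"
    using assms by (simp add: path_exp_Suc markov_op_add markov_op_const)
qed

lemma path_exp_path_sum_sq_Suc:
  assumes "transition_matrix P"
  shows "path_exp P (\<lambda>xs. (path_sum f xs)\<^sup>2) (Suc n) = (\<lambda>x.
    (f x)\<^sup>2 + 2 * f x * markov_op P (path_exp P (path_sum f) n) x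
      + markov_op P (path_exp P (\<lambda>xs. (path_sum f xs)\<^sup>2) n) x)"
proof
  fix x
  have "(f x + path_sum f ys)\<^sup>2 = (f x)\<^sup>2 + (2 * f x * path_sum f ys + (path_sum f ys)\<^sup>2)" for ys
    by (simp add: power2_eq_square algebra_simps)
  then have "path_exp P (\<lambda>ys. (path_sum f (x # ys))\<^sup>2) n =
      (\<lambda>y. (f x)\<^sup>2 + (2 * f x * path_exp P (path_sum f) n y + path_exp P (\<lambda>ys. (path_sum f ys)\<^sup>2) n y))"
    using assms by (simp add: fun_eq_iff path_exp_add path_exp_scale path_exp_const)
  then show "path_exp P (\<lambda>xs. (path_sum f xs)\<^sup>2) (Suc n) x =
    (f x)\<^sup>2 + 2 * f x * markov_op P (path_exp P (path_sum f) n) x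
      + markov_op P (path_exp P (\<lambda>xs. (path_sum f xs)\<^sup>2) n) x"
    using assms by (simp add: path_exp_Suc markov_op_add markov_op_scale markov_op_const add.assoc)
qed

lemma sum_pi_markov_op:
  assumes "transition_matrix P" "reversible \<pi> P"
  shows "(\<Sum>x\<in>UNIV. \<pi> x * markov_op P g x) = (\<Sum>x\<in>UNIV. \<pi> x * g x)"
proof -
  have "(\<Sum>x\<in>UNIV. \<pi> x * markov_op P g x) = (\<Sum>x\<in>UNIV. \<Sum>y\<in>UNIV. \<pi> x * P x y * g y)"
    by (simp add: markov_op_def sum_distrib_left mult.assoc)
  also have "\<dots> = (\<Sum>y\<in>UNIV. \<Sum>x\<in>UNIV. \<pi> y * P y x * g y)"
    using assms(2) by (subst sum.swap) (simp add: reversible_def)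
  also have "\<dots> = (\<Sum>y\<in>UNIV. \<pi> y * g y * (\<Sum>x\<in>UNIV. P y x))"
    by (simp add: sum_distrib_left algebra_simps)
  also have "\<dots> = (\<Sum>x\<in>UNIV. \<pi> x * g x)"
    using assms(1) by (simp add: transition_matrix_def)
  finally show ?thesis .
qed

lemma markov_op_path_exp_path_sum:
  assumes "transition_matrix P"
  shows "markov_op P (path_exp P (path_sum h) n) x = (\<Sum>k\<le>n. (markov_op P ^^ Suc k) h x)"
proof (induction n arbitrary: x)
  case 0
  then show ?case by (simp add: path_exp_def)
next
  case (Suc n)
  have "markov_op P (path_exp P (path_sum h) (Suc n)) x
      = markov_op P h x + markov_op P (\<lambda>y. \<Sum>k\<le>n. (markov_op P ^^ Suc k) h y) x"
    by (simp add: path_exp_path_sum_Suc[OF assms] Suc.IH markov_op_add)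
  also have "\<dots> = (\<Sum>k\<le>Suc n. (markov_op P ^^ Suc k) h x)"
    by (simp add: markov_op_sum sum.atMost_Suc_shift del: sum.atMost_Suc)
  finally show ?case .
qed

lemma sum_mean_Suc_eq_0:
  assumes P: "transition_matrix P" "reversible \<pi> P" and h: "(\<Sum>x\<in>UNIV. \<pi> x * h x) = 0"
  shows "sum_mean \<pi> P h (Suc n) = 0"
proof -
  have "(\<Sum>x\<in>UNIV. \<pi> x * path_exp P (path_sum h) n x) = 0"
  proof (induction n)
    case (Suc n)
    then show ?case
      using h sum_pi_markov_op[OF P]
      by (simp add: path_exp_path_sum_Suc[OF P(1)] distrib_left sum.distrib)
  qed (use h in simp)
  then show ?thesis by (simp add: sum_mean_def sum_path_prob_Suc)
qed

lemma sum_var_Suc_centered: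
  assumes "transition_matrix P" "reversible \<pi> P" "(\<Sum>x\<in>UNIV. \<pi> x * h x) = 0"
  shows "sum_var \<pi> P h (Suc n) = (\<Sum>x\<in>UNIV. \<pi> x * path_exp P (\<lambda>xs. (path_sum h xs)\<^sup>2) n x)"
  using sum_mean_Suc_eq_0[OF assms] by (simp add: sum_var_def sum_path_prob_Suc)

lemma second_moment_Suc:
  assumes P: "transition_matrix P" "reversible \<pi> P"
  shows "(\<Sum>x\<in>UNIV. \<pi> x * path_exp P (\<lambda>xs. (path_sum h xs)\<^sup>2) (Suc n) x)
    = (\<Sum>x\<in>UNIV. \<pi> x * path_exp P (\<lambda>xs. (path_sum h xs)\<^sup>2) n x) + weighted_inner \<pi> h h
      + 2 * (\<Sum>k\<le>n. weighted_inner \<pi> h ((markov_op P ^^ Suc k) h))"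
proof -
  let ?A = "path_exp P (path_sum h) n" and ?B = "path_exp P (\<lambda>xs. (path_sum h xs)\<^sup>2) n"
  have cross: "(\<Sum>x\<in>UNIV. \<pi> x * h x * markov_op P ?A x)
      = (\<Sum>k\<le>n. weighted_inner \<pi> h ((markov_op P ^^ Suc k) h))"
    unfolding markov_op_path_exp_path_sum[OF P(1)] weighted_inner_def sum_distrib_left
    by (rule sum.swap)
  have "(\<Sum>x\<in>UNIV. \<pi> x * path_exp P (\<lambda>xs. (path_sum h xs)\<^sup>2) (Suc n) x)
      = (\<Sum>x\<in>UNIV. \<pi> x * markov_op P ?B x) + (\<Sum>x\<in>UNIV. \<pi> x * h x * h x)
        + 2 * (\<Sum>x\<in>UNIV. \<pi> x * h x * markov_op P ?A x)"
    unfolding path_exp_path_sum_sq_Suc[OF P(1)]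
    by (simp add: distrib_left sum.distrib sum_distrib_left power2_eq_square mult_ac)
  also have "\<dots> = (\<Sum>x\<in>UNIV. \<pi> x * ?B x) + weighted_inner \<pi> h h
      + 2 * (\<Sum>k\<le>n. weighted_inner \<pi> h ((markov_op P ^^ Suc k) h))"
    unfolding sum_pi_markov_op[OF P] cross weighted_inner_def ..
  finally show ?thesis .
qed

lemma path_sum_diff_const: "path_sum (\<lambda>x. f x - c) xs = path_sum f xs - c * real (length xs)"
  by (induction xs) (auto simp: algebra_simps)

lemma asym_var_diff_const:
  assumes "prob_dist \<pi>" "transition_matrix P"
  shows "asym_var \<pi> (\<lambda>x. f x - c) P = asym_var \<pi> f P"
proof -
  have "sum_mean \<pi> P (\<lambda>x. f x - c) N
      = sum_mean \<pi> P f N - (\<Sum>xs | length xs = N. path_prob \<pi> P xs) * (c * real N)" for N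
    by (simp add: sum_mean_def path_sum_diff_const right_diff_distrib sum_subtractf sum_distrib_right)
  then have "sum_mean \<pi> P (\<lambda>x. f x - c) N = sum_mean \<pi> P f N - c * real N" for N
    by (simp add: sum_path_prob_eq_1[OF assms])
  then have "sum_var \<pi> P (\<lambda>x. f x - c) N = sum_var \<pi> P f N" for N
    by (simp add: sum_var_def path_sum_diff_const)
  then show ?thesis by (simp add: asym_var_def)
qed

subsection \<open>Asymptotic variance from a spectral decomposition\<close>

text \<open>
  In closed form, eigen_var n \<mu> = sum_{i,j<=n} \<mu>^|i-j|, the variance of \<phi>(X_0) + ... + \<phi>(X_n)
  for a normalised eigenfunction \<phi> with eigenvalue \<mu> \<noteq> 1.
\<close>

definition eigen_var :: "nat \<Rightarrow> real \<Rightarrow> real" where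
  "eigen_var n \<mu> = real (Suc n) * (1 + \<mu>) / (1 - \<mu>) - 2 * \<mu> * (1 - \<mu> ^ Suc n) / (1 - \<mu>)\<^sup>2"

lemma eigen_var_0:
  assumes "\<mu> \<noteq> 1"
  shows "eigen_var 0 \<mu> = 1"
proof -
  have ne: "1 - \<mu> \<noteq> 0" using assms by simp
  then have "2 * \<mu> * (1 - \<mu>) / (1 - \<mu>)\<^sup>2 = 2 * \<mu> / (1 - \<mu>)"
    by (simp add: power2_eq_square)
  then have "eigen_var 0 \<mu> = (1 + \<mu>) / (1 - \<mu>) - 2 * \<mu> / (1 - \<mu>)"
    by (simp add: eigen_var_def)
  also have "\<dots> = 1" using ne by (simp add: diff_divide_distrib[symmetric])
  finally show ?thesis .
qed

lemma eigen_var_Suc: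
  assumes "\<mu> \<noteq> 1"
  shows "eigen_var (Suc n) \<mu> = 1 + 2 * (\<Sum>k\<le>n. \<mu> ^ Suc k) + eigen_var n \<mu>"
proof -
  define d where "d = 1 - \<mu>"
  define X where "X = \<mu> ^ n"
  have d: "d \<noteq> 0" "\<mu> = 1 - d" using assms by (auto simp: d_def)
  have "(\<Sum>k\<le>n. \<mu> ^ Suc k) = \<mu> * (\<Sum>k<Suc n. \<mu> ^ k)"
    by (simp add: sum_distrib_left lessThan_Suc_atMost)
  also have "\<dots> = \<mu> * (1 - \<mu> * X) / d"
    using assms by (subst sum_gp_strict) (simp add: d_def X_def)
  finally have "(\<Sum>k\<le>n. \<mu> ^ Suc k) = \<mu> * (1 - \<mu> * X) / d" .
  moreover have "eigen_var (Suc n) \<mu> = (real n + 2) * (1 + \<mu>) / d - 2 * \<mu> * (1 - \<mu> * \<mu> * X) / d\<^sup>2"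
    "eigen_var n \<mu> = (real n + 1) * (1 + \<mu>) / d - 2 * \<mu> * (1 - \<mu> * X) / d\<^sup>2"
    by (simp_all add: eigen_var_def d_def X_def algebra_simps)
  moreover have "(real n + 2) * (1 + \<mu>) / d - 2 * \<mu> * (1 - \<mu> * \<mu> * X) / d\<^sup>2
      = 1 + 2 * (\<mu> * (1 - \<mu> * X) / d) + ((real n + 1) * (1 + \<mu>) / d - 2 * \<mu> * (1 - \<mu> * X) / d\<^sup>2)"
    using d(1) unfolding d(2) by (simp add: field_simps power2_eq_square)
  ultimately show ?thesis by simp
qed

lemma tendsto_eigen_var:
  assumes "\<bar>\<mu>\<bar> \<le> 1" "\<mu> \<noteq> 1"
  shows "(\<lambda>n. eigen_var n \<mu> / real (Suc n)) \<longlonglongrightarrow> (1 + \<mu>) / (1 - \<mu>)"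
proof -
  let ?c = "2 * \<mu> / (1 - \<mu>)\<^sup>2"
  have "eigen_var n \<mu> / real (Suc n) = (1 + \<mu>) / (1 - \<mu>) - ?c * ((1 - \<mu> ^ Suc n) / real (Suc n))" for n
  proof -
    have eq: "eigen_var n \<mu> = real (Suc n) * ((1 + \<mu>) / (1 - \<mu>)) - ?c * (1 - \<mu> ^ Suc n)"
      unfolding eigen_var_def by simp
    have gen: "(N * a - b * c) / N = a - b * (c / N)" if "N \<noteq> 0" for N a b c :: real
      using that by (simp add: field_simps)
    show ?thesis unfolding eq by (rule gen) simp
  qed
  moreover have "(\<lambda>n. (1 - \<mu> ^ Suc n) / real (Suc n)) \<longlonglongrightarrow> 0"
  proof (rule Lim_null_comparison)
    show "\<forall>\<^sub>F n in sequentially. norm ((1 - \<mu> ^ Suc n) / real (Suc n)) \<le> 2 * inverse (real (Suc n))"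
    proof (intro always_eventually allI)
      fix n
      have "\<bar>\<mu>\<bar> ^ Suc n \<le> 1" using assms(1) by (intro power_le_one) auto
      then have "\<bar>\<mu> ^ Suc n\<bar> \<le> 1" by (simp only: power_abs)
      then have "\<bar>1 - \<mu> ^ Suc n\<bar> \<le> 2" by linarith
      then show "norm ((1 - \<mu> ^ Suc n) / real (Suc n)) \<le> 2 * inverse (real (Suc n))"
        by (simp add: divide_inverse abs_mult mult_right_mono)
    qed
    show "(\<lambda>n. 2 * inverse (real (Suc n))) \<longlonglongrightarrow> 0"
      using tendsto_mult[OF tendsto_const LIMSEQ_inverse_real_of_nat, of 2] by simp
  qed
  then have "(\<lambda>n. (1 + \<mu>) / (1 - \<mu>) - ?c * ((1 - \<mu> ^ Suc n) / real (Suc n)))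
      \<longlonglongrightarrow> (1 + \<mu>) / (1 - \<mu>) - ?c * 0"
    by (intro tendsto_intros)
  ultimately show ?thesis by simp
qed

lemma asym_var_eq_spectral_sum:
  assumes P: "transition_matrix P" "reversible \<pi> P" and h: "(\<Sum>x\<in>UNIV. \<pi> x * h x) = 0"
    and B: "finite B" "\<And>b. b \<in> B \<Longrightarrow> \<bar>\<mu> b\<bar> \<le> 1 \<and> \<mu> b \<noteq> 1"
    and autocov: "\<And>k. weighted_inner \<pi> h ((markov_op P ^^ k) h) = (\<Sum>b\<in>B. w b * \<mu> b ^ k)"
  shows "asym_var \<pi> h P = (\<Sum>b\<in>B. w b * ((1 + \<mu> b) / (1 - \<mu> b)))"
proof -
  define M where "M n = (\<Sum>x\<in>UNIV. \<pi> x * path_exp P (\<lambda>xs. (path_sum h xs)\<^sup>2) n x)" for n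
  have autocov0: "weighted_inner \<pi> h h = sum w B" using autocov[of 0] by simp
  have M: "M n = (\<Sum>b\<in>B. w b * eigen_var n (\<mu> b))" for n
  proof (induction n)
    case 0
    have "M 0 = weighted_inner \<pi> h h"
      by (simp add: M_def weighted_inner_def power2_eq_square mult.assoc)
    then show ?case using autocov0 B(2) by (simp add: eigen_var_0)
  next
    case (Suc n)
    have "M (Suc n) = M n + weighted_inner \<pi> h h
        + 2 * (\<Sum>k\<le>n. weighted_inner \<pi> h ((markov_op P ^^ Suc k) h))"
      unfolding M_def by (rule second_moment_Suc[OF P])
    also have "\<dots> = (\<Sum>b\<in>B. w b * eigen_var n (\<mu> b)) + sum w B
        + 2 * (\<Sum>k\<le>n. \<Sum>b\<in>B. w b * \<mu> b ^ Suc k)"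
      by (simp only: Suc.IH autocov0 autocov)
    also have "\<dots> = (\<Sum>b\<in>B. w b * eigen_var (Suc n) (\<mu> b))"
      using B(2) by (simp add: eigen_var_Suc algebra_simps sum.distrib sum_distrib_left
          sum.swap[of _ "{..n}"])
    finally show ?case .
  qed
  have "(\<lambda>n. sum_var \<pi> P h (Suc n) / real (Suc n)) \<longlonglongrightarrow> (\<Sum>b\<in>B. w b * ((1 + \<mu> b) / (1 - \<mu> b)))"
    unfolding sum_var_Suc_centered[OF P h] M[unfolded M_def] sum_divide_distrib
      times_divide_eq_right[symmetric]
    using B(2) by (intro tendsto_sum tendsto_mult tendsto_const tendsto_eigen_var) auto
  then show ?thesis
    unfolding asym_var_def by (intro limI) (rule LIMSEQ_imp_Suc)
qed

subsection \<open>Comparison of two reversible chains\<close>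

lemma markov_op_power_expansion:
  assumes "\<And>\<phi> x. \<phi> \<in> \<Phi> \<Longrightarrow> markov_op P \<phi> x = \<mu> \<phi> * \<phi> x"
  shows "(markov_op P ^^ k) (\<lambda>x. \<Sum>\<phi>\<in>\<Phi>. c \<phi> * \<phi> x) = (\<lambda>x. \<Sum>\<phi>\<in>\<Phi>. c \<phi> * \<mu> \<phi> ^ k * \<phi> x)"
proof (induction k)
  case (Suc k)
  have "markov_op P (\<lambda>x. \<Sum>\<phi>\<in>\<Phi>. c \<phi> * \<mu> \<phi> ^ k * \<phi> x) y
      = (\<Sum>\<phi>\<in>\<Phi>. c \<phi> * \<mu> \<phi> ^ k * markov_op P \<phi> y)" for y
    by (simp only: markov_op_sum markov_op_scale)
  also have "\<dots> y = (\<Sum>\<phi>\<in>\<Phi>. c \<phi> * \<mu> \<phi> ^ Suc k * \<phi> y)" for y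
    using assms by (intro sum.cong refl) (simp add: mult_ac)
  finally have step: "markov_op P (\<lambda>x. \<Sum>\<phi>\<in>\<Phi>. c \<phi> * \<mu> \<phi> ^ k * \<phi> x) y
      = (\<Sum>\<phi>\<in>\<Phi>. c \<phi> * \<mu> \<phi> ^ Suc k * \<phi> y)" for y .
  show ?case unfolding funpow.simps(2) comp_apply Suc.IH by (rule ext) (rule step)
qed simp

lemma weighted_inner_orthonormal_expansion:
  assumes "finite \<Phi>"
    and "\<And>\<phi> \<psi>. \<phi> \<in> \<Phi> \<Longrightarrow> \<psi> \<in> \<Phi> \<Longrightarrow> weighted_inner \<pi> \<phi> \<psi> = (if \<phi> = \<psi> then 1 else 0)"
  shows "weighted_inner \<pi> (\<lambda>x. \<Sum>\<phi>\<in>\<Phi>. a \<phi> * \<phi> x) (\<lambda>x. \<Sum>\<psi>\<in>\<Phi>. c \<psi> * \<psi> x) = (\<Sum>\<phi>\<in>\<Phi>. a \<phi> * c \<phi>)"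
proof -
  have "weighted_inner \<pi> (\<lambda>x. \<Sum>\<phi>\<in>\<Phi>. a \<phi> * \<phi> x) (\<lambda>x. \<Sum>\<psi>\<in>\<Phi>. c \<psi> * \<psi> x)
      = (\<Sum>\<phi>\<in>\<Phi>. \<Sum>\<psi>\<in>\<Phi>. a \<phi> * c \<psi> * weighted_inner \<pi> \<phi> \<psi>)"
    by (simp add: weighted_inner_def sum_distrib_left sum_distrib_right sum.swap[of _ UNIV] mult_ac)
  also have "\<dots> = (\<Sum>\<phi>\<in>\<Phi>. \<Sum>\<psi>\<in>\<Phi>. if \<phi> = \<psi> then a \<phi> * c \<psi> else 0)"
    using assms(2) by (intro sum.cong refl) simp
  also have "\<dots> = (\<Sum>\<phi>\<in>\<Phi>. a \<phi> * c \<phi>)"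
    using assms(1) by (simp add: sum.delta)
  finally show ?thesis .
qed

lemma asym_var_spectral_representation:
  fixes \<pi> :: "'s::finite \<Rightarrow> real" and P :: "'s \<Rightarrow> 's \<Rightarrow> real"
  assumes pd: "prob_dist \<pi>" and P: "transition_matrix P" "irreducible_chain P" "reversible \<pi> P"
  obtains \<Phi> :: "('s \<Rightarrow> real) set" and \<mu> w where "finite \<Phi>"
    "\<And>\<phi>. \<phi> \<in> \<Phi> \<Longrightarrow> \<mu> \<phi> \<in> set (tl (eigs P))" "\<And>\<phi>. \<phi> \<in> \<Phi> \<Longrightarrow> \<mu> \<phi> < 1"
    "\<And>\<phi>. \<phi> \<in> \<Phi> \<Longrightarrow> 0 \<le> w \<phi>"
    "(\<Sum>\<phi>\<in>\<Phi>. w \<phi>) = (\<Sum>x\<in>UNIV. \<pi> x * (f x - (\<Sum>y\<in>UNIV. \<pi> y * f y))\<^sup>2)"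
    "asym_var \<pi> f P = (\<Sum>\<phi>\<in>\<Phi>. w \<phi> * ((1 + \<mu> \<phi>) / (1 - \<mu> \<phi>)))"
proof -
  have pos: "\<And>x. \<pi> x > 0" and total: "(\<Sum>x\<in>UNIV. \<pi> x) = 1" using pd by (auto simp: prob_dist_def)
  obtain \<Phi> \<mu> where \<Phi>: "finite \<Phi>"
    "\<And>\<phi> \<psi>. \<phi> \<in> \<Phi> \<Longrightarrow> \<psi> \<in> \<Phi> \<Longrightarrow> weighted_inner \<pi> \<phi> \<psi> = (if \<phi> = \<psi> then 1 else 0)"
    and eig: "\<And>\<phi> x. \<phi> \<in> \<Phi> \<Longrightarrow> markov_op P \<phi> x = \<mu> \<phi> * \<phi> x"
    and \<mu>: "\<And>\<phi>. \<phi> \<in> \<Phi> \<Longrightarrow> \<bar>\<mu> \<phi>\<bar> \<le> 1 \<and> \<mu> \<phi> \<noteq> 1 \<and> \<mu> \<phi> \<in> set (tl (eigs P))"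
    and expand: "\<And>h. weighted_inner \<pi> h (\<lambda>_. 1) = 0 \<Longrightarrow> h = (\<lambda>x. \<Sum>\<phi>\<in>\<Phi>. weighted_inner \<pi> h \<phi> * \<phi> x)"
    by (rule irreducible_reversible_eigenfunction_basis[OF pos P]) (rule that)
  define h where "h x = f x - (\<Sum>y\<in>UNIV. \<pi> y * f y)" for x
  define c where "c \<phi> = weighted_inner \<pi> h \<phi>" for \<phi>
  have h_mean: "(\<Sum>x\<in>UNIV. \<pi> x * h x) = 0"
    using total by (simp add: h_def right_diff_distrib sum_subtractf sum_distrib_right[symmetric])
  then have h_expand: "h = (\<lambda>x. \<Sum>\<phi>\<in>\<Phi>. c \<phi> * \<phi> x)"
    unfolding c_def by (intro expand) (simp add: weighted_inner_def)
  have autocov: "weighted_inner \<pi> h ((markov_op P ^^ k) h) = (\<Sum>\<phi>\<in>\<Phi>. (c \<phi>)\<^sup>2 * \<mu> \<phi> ^ k)" for k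
  proof -
    have "(markov_op P ^^ k) h = (\<lambda>x. \<Sum>\<phi>\<in>\<Phi>. (c \<phi> * \<mu> \<phi> ^ k) * \<phi> x)"
      by (subst h_expand) (rule markov_op_power_expansion[OF eig])
    then have "weighted_inner \<pi> h ((markov_op P ^^ k) h) = (\<Sum>\<phi>\<in>\<Phi>. c \<phi> * (c \<phi> * \<mu> \<phi> ^ k))"
      by (simp only:) (subst h_expand, rule weighted_inner_orthonormal_expansion[OF \<Phi>])
    then show ?thesis by (simp add: power2_eq_square mult.assoc)
  qed
  have "asym_var \<pi> f P = asym_var \<pi> h P"
    unfolding h_def by (rule asym_var_diff_const[OF pd P(1), symmetric])
  also have "\<dots> = (\<Sum>\<phi>\<in>\<Phi>. (c \<phi>)\<^sup>2 * ((1 + \<mu> \<phi>) / (1 - \<mu> \<phi>)))"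
    using \<mu> by (intro asym_var_eq_spectral_sum[OF P(1,3) h_mean \<Phi>(1) _ autocov]) auto
  moreover have "(\<Sum>\<phi>\<in>\<Phi>. (c \<phi>)\<^sup>2) = (\<Sum>x\<in>UNIV. \<pi> x * (f x - (\<Sum>y\<in>UNIV. \<pi> y * f y))\<^sup>2)"
    using autocov[of 0] by (simp add: weighted_inner_def h_def power2_eq_square mult.assoc)
  ultimately show ?thesis using that[of \<Phi> \<mu> "\<lambda>\<phi>. (c \<phi>)\<^sup>2"] \<Phi>(1) \<mu> by fastforce
qed

lemma weighted_sum_le_if_pairwise_le:
  fixes x y :: "_ \<Rightarrow> real"
  assumes "finite A" "finite B" "\<And>a. a \<in> A \<Longrightarrow> 0 \<le> v a" "\<And>b. b \<in> B \<Longrightarrow> 0 \<le> w b"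
    and total: "sum v A = sum w B" and le: "\<And>a b. a \<in> A \<Longrightarrow> b \<in> B \<Longrightarrow> x a \<le> y b"
  shows "(\<Sum>a\<in>A. v a * x a) \<le> (\<Sum>b\<in>B. w b * y b)"
proof (cases "B = {}")
  case True
  then have "\<forall>a\<in>A. v a = 0" using assms(1,3) total by (simp add: sum_nonneg_eq_0_iff)
  with True show ?thesis by simp
next
  case False
  define m where "m = Min (y ` B)"
  have "(\<Sum>a\<in>A. v a * x a) \<le> (\<Sum>a\<in>A. v a * m)"
    using assms False by (intro sum_mono mult_left_mono) (auto simp: m_def)
  also have "\<dots> = (\<Sum>b\<in>B. w b * m)" by (simp add: total sum_distrib_right[symmetric])
  also have "\<dots> \<le> (\<Sum>b\<in>B. w b * y b)"
    using assms by (intro sum_mono mult_left_mono) (auto simp: m_def)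
  finally show ?thesis .
qed

lemma one_plus_div_one_minus_mono:
  fixes s t :: real
  assumes "s \<le> t" "t < 1"
  shows "(1 + s) / (1 - s) \<le> (1 + t) / (1 - t)"
proof -
  have "(1 + s) * (1 - t) \<le> (1 + t) * (1 - s)" using assms by (simp add: algebra_simps)
  then show ?thesis using assms by (simp add: divide_simps)
qed

lemma asym_var_le_if_eigenvalues_le:
  fixes \<pi> :: "'s::finite \<Rightarrow> real" and P Q :: "'s \<Rightarrow> 's \<Rightarrow> real"
  assumes pd: "prob_dist \<pi>"
    and P: "transition_matrix P" "irreducible_chain P" "reversible \<pi> P"
    and Q: "transition_matrix Q" "irreducible_chain Q" "reversible \<pi> Q"
    and le: "\<And>s t. s \<in> set (tl (eigs P)) \<Longrightarrow> t \<in> set (tl (eigs Q)) \<Longrightarrow> s \<le> t"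
  shows "asym_var \<pi> f P \<le> asym_var \<pi> f Q"
proof (rule asym_var_spectral_representation[OF pd P])
  fix \<Phi> :: "('s \<Rightarrow> real) set" and \<mu> v
  assume \<Phi>: "finite \<Phi>" "\<And>\<phi>. \<phi> \<in> \<Phi> \<Longrightarrow> \<mu> \<phi> \<in> set (tl (eigs P))"
    "\<And>\<phi>. \<phi> \<in> \<Phi> \<Longrightarrow> \<mu> \<phi> < 1" "\<And>\<phi>. \<phi> \<in> \<Phi> \<Longrightarrow> 0 \<le> v \<phi>"
    "(\<Sum>\<phi>\<in>\<Phi>. v \<phi>) = (\<Sum>x\<in>UNIV. \<pi> x * (f x - (\<Sum>y\<in>UNIV. \<pi> y * f y))\<^sup>2)"
    "asym_var \<pi> f P = (\<Sum>\<phi>\<in>\<Phi>. v \<phi> * ((1 + \<mu> \<phi>) / (1 - \<mu> \<phi>)))"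
  show ?thesis
  proof (rule asym_var_spectral_representation[OF pd Q])
    fix \<Psi> :: "('s \<Rightarrow> real) set" and \<nu> w
    assume \<Psi>: "finite \<Psi>" "\<And>\<psi>. \<psi> \<in> \<Psi> \<Longrightarrow> \<nu> \<psi> \<in> set (tl (eigs Q))"
      "\<And>\<psi>. \<psi> \<in> \<Psi> \<Longrightarrow> \<nu> \<psi> < 1" "\<And>\<psi>. \<psi> \<in> \<Psi> \<Longrightarrow> 0 \<le> w \<psi>"
      "(\<Sum>\<psi>\<in>\<Psi>. w \<psi>) = (\<Sum>x\<in>UNIV. \<pi> x * (f x - (\<Sum>y\<in>UNIV. \<pi> y * f y))\<^sup>2)"
      "asym_var \<pi> f Q = (\<Sum>\<psi>\<in>\<Psi>. w \<psi> * ((1 + \<nu> \<psi>) / (1 - \<nu> \<psi>)))"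
    have ratio_le: "(1 + \<mu> \<phi>) / (1 - \<mu> \<phi>) \<le> (1 + \<nu> \<psi>) / (1 - \<nu> \<psi>)"
      if "\<phi> \<in> \<Phi>" "\<psi> \<in> \<Psi>" for \<phi> \<psi>
      using le[OF \<Phi>(2) \<Psi>(2), OF that] \<Psi>(3)[OF that(2)] by (rule one_plus_div_one_minus_mono)
    show ?thesis
      unfolding \<Phi>(6) \<Psi>(6)
      by (rule weighted_sum_le_if_pairwise_le) (use \<Phi>(1,4,5) \<Psi>(1,4,5) ratio_le in auto)
  qed
qed

theorem theorem6:
  fixes \<pi> :: "'s::finite \<Rightarrow> real" and P Q :: "'s \<Rightarrow> 's \<Rightarrow> real"
  assumes "prob_dist \<pi>"
    and "transition_matrix P" and "transition_matrix Q"
    and "irreducible_chain P" and "irreducible_chain Q"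
    and "reversible \<pi> P" and "reversible \<pi> Q"
    and "\<forall>i j. 1 \<le> i \<and> i < CARD('s) \<and> 1 \<le> j \<and> j < CARD('s) \<longrightarrow> eigs P ! i \<le> eigs Q ! j"
  shows "efficiency_dominates \<pi> P Q"
  unfolding efficiency_dominates_def
  using asym_var_le_if_eigenvalues_le[OF assms(1,2,4,6,3,5,7) tl_eigs_le_if_nth_le[OF assms(8)]]
  by blast


end
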